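(* Let $P$ be a poset that is both directed and codirected, and let $M\colon P\to\mathbf{Vec}$ be pointwise finite-dimensional with $M_p\neq0$ for all $p\in P$ and with $M(p\le q)\colon M_p\to M_q$ surjective for all $p\le q$. Then $M$ has a direct summand isomorphic to $k_P$.
   Context: $P$ is directed if any two elements have a common upper bound in $P$, codirected if any two elements have a common lower bound in $P$. Persistence modules over $P$ are functors $P\to\mathbf{Vec}$ with structure maps $M(p\le q)$. $k_P$ is the module with $k$ at every point and identity structure maps. *)

theory Defs
  imports Main "HOL.Vector_Spaces"
begin

text \<open>A persistence module over (P,R) with values in vector spaces over the field 'k is
given by subspaces V p of an ambient k-vector space 'v (scalar multiplication sc),
together with structure maps f p q : V p \<rightarrow> V q for (p,q) \<in> R, which are linear, with
f p p = id and f q r \<circ> f p q = f p r (on V p).\<close>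

definition is_pmod ::
  "'p set \<Rightarrow> 'p rel \<Rightarrow> ('k::field \<Rightarrow> 'v::ab_group_add \<Rightarrow> 'v) \<Rightarrow> ('p \<Rightarrow> 'v set)
   \<Rightarrow> ('p \<Rightarrow> 'p \<Rightarrow> 'v \<Rightarrow> 'v) \<Rightarrow> bool" where
  "is_pmod P R sc V f \<longleftrightarrow>
     (\<forall>p\<in>P. module.subspace sc (V p)) \<and>
     (\<forall>p\<in>P. \<forall>q\<in>P. (p, q) \<in> R \<longrightarrow>
        (\<forall>x\<in>V p. f p q x \<in> V q) \<and>
        (\<forall>x\<in>V p. \<forall>y\<in>V p. f p q (x + y) = f p q x + f p q y) \<and>
        (\<forall>c. \<forall>x\<in>V p. f p q (sc c x) = sc c (f p q x))) \<and>
     (\<forall>p\<in>P. \<forall>x\<in>V p. f p p x = x) \<and>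
     (\<forall>p\<in>P. \<forall>q\<in>P. \<forall>r\<in>P. (p, q) \<in> R \<and> (q, r) \<in> R \<longrightarrow>
        (\<forall>x\<in>V p. f q r (f p q x) = f p r x))"

definition pfd :: "'p set \<Rightarrow> ('k::field \<Rightarrow> 'v::ab_group_add \<Rightarrow> 'v) \<Rightarrow> ('p \<Rightarrow> 'v set) \<Rightarrow> bool" where
  "pfd P sc V \<longleftrightarrow> (\<forall>p\<in>P. \<exists>B. finite B \<and> B \<subseteq> V p \<and> module.span sc B = V p)"

definition is_submod ::
  "'p set \<Rightarrow> 'p rel \<Rightarrow> ('k::field \<Rightarrow> 'v::ab_group_add \<Rightarrow> 'v) \<Rightarrow> ('p \<Rightarrow> 'v set)
   \<Rightarrow> ('p \<Rightarrow> 'p \<Rightarrow> 'v \<Rightarrow> 'v) \<Rightarrow> ('p \<Rightarrow> 'v set) \<Rightarrow> bool" where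
  "is_submod P R sc V f N \<longleftrightarrow>
     (\<forall>p\<in>P. module.subspace sc (N p) \<and> N p \<subseteq> V p) \<and>
     (\<forall>p\<in>P. \<forall>q\<in>P. (p, q) \<in> R \<longrightarrow> (\<forall>x\<in>N p. f p q x \<in> N q))"

definition pmod_iso ::
  "'p set \<Rightarrow> 'p rel \<Rightarrow> ('k::field \<Rightarrow> 'v::ab_group_add \<Rightarrow> 'v) \<Rightarrow> ('p \<Rightarrow> 'v set)
   \<Rightarrow> ('p \<Rightarrow> 'p \<Rightarrow> 'v \<Rightarrow> 'v) \<Rightarrow> ('k \<Rightarrow> 'w::ab_group_add \<Rightarrow> 'w) \<Rightarrow> ('p \<Rightarrow> 'w set)
   \<Rightarrow> ('p \<Rightarrow> 'p \<Rightarrow> 'w \<Rightarrow> 'w) \<Rightarrow> bool" where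
  "pmod_iso P R sc V f sc' W g \<longleftrightarrow>
     (\<exists>\<phi>. (\<forall>p\<in>P. bij_betw (\<phi> p) (V p) (W p) \<and>
              (\<forall>x\<in>V p. \<forall>y\<in>V p. \<phi> p (x + y) = \<phi> p x + \<phi> p y) \<and>
              (\<forall>c. \<forall>x\<in>V p. \<phi> p (sc c x) = sc' c (\<phi> p x))) \<and>
          (\<forall>p\<in>P. \<forall>q\<in>P. (p, q) \<in> R \<longrightarrow> (\<forall>x\<in>V p. \<phi> q (f p q x) = g p q (\<phi> p x))))"

definition kP_space :: "'p \<Rightarrow> 'k::field set" where "kP_space p = UNIV"
definition kP_map :: "'p \<Rightarrow> 'p \<Rightarrow> 'k::field \<Rightarrow> 'k" where "kP_map p q c = c"

definition has_kP_summand ::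
  "'p set \<Rightarrow> 'p rel \<Rightarrow> ('k::field \<Rightarrow> 'v::ab_group_add \<Rightarrow> 'v) \<Rightarrow> ('p \<Rightarrow> 'v set)
   \<Rightarrow> ('p \<Rightarrow> 'p \<Rightarrow> 'v \<Rightarrow> 'v) \<Rightarrow> bool" where
  "has_kP_summand P R sc V f \<longleftrightarrow>
     (\<exists>N C. is_submod P R sc V f N \<and> is_submod P R sc V f C \<and>
        (\<forall>p\<in>P. N p \<inter> C p = {0} \<and> V p = {x + y | x y. x \<in> N p \<and> y \<in> C p}) \<and>
        pmod_iso P R (*) kP_space kP_map sc N f)"

definition directed_on :: "'p set \<Rightarrow> 'p rel \<Rightarrow> bool" where
  "directed_on P R \<longleftrightarrow> (\<forall>p\<in>P. \<forall>q\<in>P. \<exists>r\<in>P. (p, r) \<in> R \<and> (q, r) \<in> R)"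

definition codirected_on :: "'p set \<Rightarrow> 'p rel \<Rightarrow> bool" where
  "codirected_on P R \<longleftrightarrow> (\<forall>p\<in>P. \<forall>q\<in>P. \<exists>r\<in>P. (r, p) \<in> R \<and> (r, q) \<in> R)"

end

theory Submission
  imports Defs
begin

text \<open>Pointwise finite dimension and surjectivity make the kernels of the maps out of a point
  stabilise, which yields a point \<open>p0\<close> all of whose outgoing structure maps are bijective. Going up
  to a common upper bound with \<open>p0\<close> then identifies every \<open>M\<^sub>q\<close> naturally with \<open>M\<^sub>p\<^sub>0\<close>, and a
  linear functional on \<open>M\<^sub>p\<^sub>0\<close> becomes a surjective morphism \<open>\<phi> : M \<rightarrow> k\<^sub>P\<close>. A compatible family
  \<open>x\<close> with \<open>\<phi>(x) = 1\<close> splits \<open>\<phi>\<close>, so \<open>M = k\<^sub>P x \<oplus> ker \<phi>\<close>. Such a family is a point in the inverse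
  limit of the level sets \<open>\<phi>\<^sub>p\<^sup>-\<^sup>1(1)\<close>, nonempty affine subspaces of finite dimension with
  surjective transition maps. Since descending chains of such flats have nonempty intersection,
  Zorn's lemma gives a minimal subsystem of nonempty flats, and over a codirected poset a minimal
  subsystem consists of singletons.\<close>

context vector_space
begin

definition flat :: "'b set \<Rightarrow> bool" where
  "flat S \<longleftrightarrow> (\<forall>x\<in>S. \<forall>y\<in>S. \<forall>z\<in>S. \<forall>c. x + c *s (y - z) \<in> S)"

definition flat_direction :: "'b set \<Rightarrow> 'b set" where
  "flat_direction S = {y - z | y z. y \<in> S \<and> z \<in> S}"

lemma flat_Inter: "(\<And>S. S \<in> \<F> \<Longrightarrow> flat S) \<Longrightarrow> flat (\<Inter>\<F>)"
  unfolding flat_def by blast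

lemma subspace_flat_direction:
  assumes "flat S" "S \<noteq> {}"
  shows "subspace (flat_direction S)"
proof (rule subspaceI)
  obtain a where "a \<in> S" using assms(2) by blast
  then show "0 \<in> flat_direction S" unfolding flat_direction_def by force
next
  fix u w assume "u \<in> flat_direction S" "w \<in> flat_direction S"
  then obtain y1 z1 y2 z2 where "u = y1 - z1" "w = y2 - z2" "y1 \<in> S" "z1 \<in> S" "y2 \<in> S" "z2 \<in> S"
    unfolding flat_direction_def by blast
  moreover have "y1 + 1 *s (y2 - z2) \<in> S" using assms(1) calculation unfolding flat_def by blast
  ultimately show "u + w \<in> flat_direction S" unfolding flat_direction_def
    by (auto intro!: exI[of _ "y1 + (y2 - z2)"] exI[of _ z1] simp: algebra_simps)
next
  fix c u assume "u \<in> flat_direction S"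
  then obtain y z where "u = y - z" "y \<in> S" "z \<in> S" unfolding flat_direction_def by blast
  moreover have "z + c *s (y - z) \<in> S" using assms(1) calculation unfolding flat_def by blast
  moreover have "c *s u = (z + c *s (y - z)) - z" using calculation by simp
  ultimately show "c *s u \<in> flat_direction S" unfolding flat_direction_def by blast
qed

lemma flat_direction_mono: "S \<subseteq> T \<Longrightarrow> flat_direction S \<subseteq> flat_direction T"
  unfolding flat_direction_def by blast

lemma flat_direction_subset_span: "S \<subseteq> span B \<Longrightarrow> flat_direction S \<subseteq> span B"
  unfolding flat_direction_def using span_diff by blast

lemma flat_eq_if_direction_eq:
  assumes "flat S" "S \<subseteq> T" "S \<noteq> {}" "flat_direction T = flat_direction S"
  shows "S = T"
proof
  show "T \<subseteq> S"
  proof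
    fix t assume "t \<in> T"
    obtain a where a: "a \<in> S" using assms(3) by blast
    with \<open>t \<in> T\<close> assms(2,4) have "t - a \<in> flat_direction S"
      unfolding flat_direction_def by blast
    then obtain y z where "t - a = y - z" "y \<in> S" "z \<in> S" unfolding flat_direction_def by blast
    moreover have "a + 1 *s (y - z) \<in> S" using assms(1) a calculation unfolding flat_def by blast
    ultimately show "t \<in> S" by (simp add: diff_eq_eq add.commute)
  qed
qed (fact assms(2))

lemma dim_strict_mono:
  assumes "finite B" "subspace A" "A \<subset> C" "C \<subseteq> span B"
  shows "dim A < dim C"
proof -
  obtain BA where BA: "BA \<subseteq> A" "independent BA" "A \<subseteq> span BA" "card BA = dim A"
    by (rule basis_exists)
  obtain BC where BC: "BC \<subseteq> C" "independent BC" "C \<subseteq> span BC" "card BC = dim C"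
    by (rule basis_exists)
  obtain c where c: "c \<in> C" "c \<notin> A" using assms(3) by blast
  have "span BA \<subseteq> A" using BA(1) assms(2) span_minimal by blast
  with c BA(2) have ind: "independent (insert c BA)" using independent_insertI by blast
  have "finite BC" using independent_span_bound[OF assms(1) BC(2)] BC(1) assms(4) by blast
  moreover have "insert c BA \<subseteq> span BC" using BA(1) c assms(3) BC(3) by blast
  ultimately have "card (insert c BA) \<le> card BC"
    using independent_span_bound[OF _ ind] by blast
  moreover have "finite BA" using independent_span_bound[OF assms(1) BA(2)] BA(1) assms(3,4) by blast
  moreover have "c \<notin> BA" using c BA(1) by blast
  ultimately have "Suc (card BA) \<le> card BC" by simp
  then show ?thesis using BA(4) BC(4) by simp
qed

text \<open>A member of least direction dimension lies in all the others.\<close>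
lemma flat_chain_Inter_nonempty:
  assumes "finite B" "\<F> \<noteq> {}" "\<And>S. S \<in> \<F> \<Longrightarrow> flat S \<and> S \<noteq> {} \<and> S \<subseteq> span B"
    and chain: "\<And>S T. S \<in> \<F> \<Longrightarrow> T \<in> \<F> \<Longrightarrow> S \<subseteq> T \<or> T \<subseteq> S"
  shows "\<Inter>\<F> \<noteq> {}"
proof -
  obtain S0 where S0: "S0 \<in> \<F>" and least: "\<And>T. T \<in> \<F> \<Longrightarrow> dim (flat_direction S0) \<le> dim (flat_direction T)"
    using assms(2) ex_has_least_nat[of "\<lambda>S. S \<in> \<F>" _ "\<lambda>S. dim (flat_direction S)"] by blast
  have "S0 \<subseteq> T" if T: "T \<in> \<F>" for T
  proof (rule ccontr)
    assume "\<not> S0 \<subseteq> T"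
    with chain[OF T S0] have "T \<subset> S0" by blast
    then have "flat_direction T \<noteq> flat_direction S0"
      using flat_eq_if_direction_eq[of T S0] assms(3) T by blast
    moreover have "flat_direction T \<subseteq> flat_direction S0" using \<open>T \<subset> S0\<close> flat_direction_mono by blast
    ultimately have "dim (flat_direction T) < dim (flat_direction S0)"
      using dim_strict_mono[OF assms(1)] subspace_flat_direction flat_direction_subset_span assms(3) T S0
      by (metis psubsetI)
    with least[OF T] show False by simp
  qed
  with S0 assms(3) show ?thesis by blast
qed

end

locale persistence_module = vector_space scale
  for scale :: "'k::field \<Rightarrow> 'v::ab_group_add \<Rightarrow> 'v" (infixr \<open>*s\<close> 75) +
  fixes P :: "'p set" and R :: "'p rel" and V :: "'p \<Rightarrow> 'v set" and f :: "'p \<Rightarrow> 'p \<Rightarrow> 'v \<Rightarrow> 'v"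
  assumes partial_order: "partial_order_on P R"
    and pmod: "is_pmod P R scale V f"
begin

lemma R_field: "(p, q) \<in> R \<Longrightarrow> p \<in> P" "(p, q) \<in> R \<Longrightarrow> q \<in> P"
  using partial_order_onD(4)[OF partial_order] by auto

lemma R_refl: "p \<in> P \<Longrightarrow> (p, p) \<in> R"
  using partial_order_onD(1)[OF partial_order] unfolding refl_on_def by blast

lemma R_trans: "(p, q) \<in> R \<Longrightarrow> (q, r) \<in> R \<Longrightarrow> (p, r) \<in> R"
  using partial_order_onD(2)[OF partial_order] unfolding trans_def by blast

lemma subspace_V: "p \<in> P \<Longrightarrow> subspace (V p)"
  using pmod unfolding is_pmod_def by blast

lemma V_zero: "p \<in> P \<Longrightarrow> 0 \<in> V p"
  using subspace_V subspace_0 by blast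

lemma V_add: "p \<in> P \<Longrightarrow> x \<in> V p \<Longrightarrow> y \<in> V p \<Longrightarrow> x + y \<in> V p"
  using subspace_V subspace_add by blast

lemma V_diff: "p \<in> P \<Longrightarrow> x \<in> V p \<Longrightarrow> y \<in> V p \<Longrightarrow> x - y \<in> V p"
  using subspace_V subspace_diff by blast

lemma V_scale: "p \<in> P \<Longrightarrow> x \<in> V p \<Longrightarrow> c *s x \<in> V p"
  using subspace_V subspace_scale by blast

lemma f_in_V: "(p, q) \<in> R \<Longrightarrow> x \<in> V p \<Longrightarrow> f p q x \<in> V q"
  using pmod R_field unfolding is_pmod_def by blast

lemma f_add: "(p, q) \<in> R \<Longrightarrow> x \<in> V p \<Longrightarrow> y \<in> V p \<Longrightarrow> f p q (x + y) = f p q x + f p q y"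
  using pmod R_field unfolding is_pmod_def by blast

lemma f_scale: "(p, q) \<in> R \<Longrightarrow> x \<in> V p \<Longrightarrow> f p q (c *s x) = c *s f p q x"
  using pmod R_field unfolding is_pmod_def by blast

lemma f_id: "p \<in> P \<Longrightarrow> x \<in> V p \<Longrightarrow> f p p x = x"
  using pmod unfolding is_pmod_def by blast

lemma f_comp: "(p, q) \<in> R \<Longrightarrow> (q, r) \<in> R \<Longrightarrow> x \<in> V p \<Longrightarrow> f q r (f p q x) = f p r x"
  using pmod R_field unfolding is_pmod_def by blast

lemma f_zero: "(p, q) \<in> R \<Longrightarrow> f p q 0 = 0"
  using f_add[of p q 0 0] V_zero R_field by simp

lemma f_diff: "(p, q) \<in> R \<Longrightarrow> x \<in> V p \<Longrightarrow> y \<in> V p \<Longrightarrow> f p q (x - y) = f p q x - f p q y"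
  using f_add[of p q "x - y" y] V_diff R_field by (simp add: algebra_simps)

lemma f_affine_comb:
  "(p, q) \<in> R \<Longrightarrow> x \<in> V p \<Longrightarrow> y \<in> V p \<Longrightarrow> z \<in> V p \<Longrightarrow>
    f p q (x + c *s (y - z)) = f p q x + c *s (f p q y - f p q z)"
  by (simp add: f_add f_scale f_diff V_scale V_diff R_field)

lemma flat_fibre:
  assumes "(p, q) \<in> R" "flat S" "S \<subseteq> V p"
  shows "flat (S \<inter> {z. f p q z = y})"
  unfolding flat_def
proof (intro ballI allI)
  fix x1 x2 x3 c assume x: "x1 \<in> S \<inter> {z. f p q z = y}" "x2 \<in> S \<inter> {z. f p q z = y}" "x3 \<in> S \<inter> {z. f p q z = y}"
  have xV: "x1 \<in> V p" "x2 \<in> V p" "x3 \<in> V p" using x assms(3) by auto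
  have "x1 + c *s (x2 - x3) \<in> S" using assms(2) x unfolding flat_def by blast
  moreover have "f p q (x1 + c *s (x2 - x3)) = y" using f_affine_comb[OF assms(1) xV] x by simp
  ultimately show "x1 + c *s (x2 - x3) \<in> S \<inter> {z. f p q z = y}" by simp
qed

lemma flat_image:
  assumes "(p, q) \<in> R" "flat S" "S \<subseteq> V p"
  shows "flat (f p q ` S)"
  unfolding flat_def
proof (intro ballI allI)
  fix y1 y2 y3 c assume "y1 \<in> f p q ` S" "y2 \<in> f p q ` S" "y3 \<in> f p q ` S"
  then obtain x1 x2 x3 where x: "x1 \<in> S" "x2 \<in> S" "x3 \<in> S" "y1 = f p q x1" "y2 = f p q x2" "y3 = f p q x3"
    by blast
  have xV: "x1 \<in> V p" "x2 \<in> V p" "x3 \<in> V p" using x assms(3) by auto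
  have "x1 + c *s (x2 - x3) \<in> S" using assms(2) x unfolding flat_def by blast
  moreover have "f p q (x1 + c *s (x2 - x3)) = y1 + c *s (y2 - y3)" using f_affine_comb[OF assms(1) xV] x by simp
  ultimately show "y1 + c *s (y2 - y3) \<in> f p q ` S" by (metis image_eqI)
qed

definition flat_system :: "('p \<Rightarrow> 'v set) \<Rightarrow> bool" where
  "flat_system S \<longleftrightarrow> (\<forall>p\<in>P. flat (S p) \<and> S p \<noteq> {} \<and> S p \<subseteq> V p) \<and>
     (\<forall>p q. (p, q) \<in> R \<longrightarrow> f p q ` S p = S q)"

lemma flat_systemD:
  assumes "flat_system S"
  shows "p \<in> P \<Longrightarrow> flat (S p)" "p \<in> P \<Longrightarrow> S p \<noteq> {}" "p \<in> P \<Longrightarrow> S p \<subseteq> V p"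
    and "(p, q) \<in> R \<Longrightarrow> f p q ` S p = S q"
  using assms unfolding flat_system_def by blast+

definition injective_point :: "'p \<Rightarrow> bool" where
  "injective_point p0 \<longleftrightarrow> p0 \<in> P \<and> (\<forall>s. (p0, s) \<in> R \<longrightarrow> inj_on (f p0 s) (V p0))"

definition natural_functional :: "('p \<Rightarrow> 'v \<Rightarrow> 'k) \<Rightarrow> bool" where
  "natural_functional \<phi> \<longleftrightarrow>
     (\<forall>p\<in>P. \<forall>x\<in>V p. \<forall>y\<in>V p. \<phi> p (x + y) = \<phi> p x + \<phi> p y) \<and>
     (\<forall>p\<in>P. \<forall>c. \<forall>x\<in>V p. \<phi> p (c *s x) = c * \<phi> p x) \<and>
     (\<forall>p q. (p, q) \<in> R \<longrightarrow> (\<forall>x\<in>V p. \<phi> q (f p q x) = \<phi> p x))"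

lemma natural_functionalD:
  assumes "natural_functional \<phi>"
  shows "p \<in> P \<Longrightarrow> y \<in> V p \<Longrightarrow> z \<in> V p \<Longrightarrow> \<phi> p (y + z) = \<phi> p y + \<phi> p z"
    and "p \<in> P \<Longrightarrow> y \<in> V p \<Longrightarrow> \<phi> p (c *s y) = c * \<phi> p y"
    and "(p, q) \<in> R \<Longrightarrow> y \<in> V p \<Longrightarrow> \<phi> q (f p q y) = \<phi> p y"
  using assms unfolding natural_functional_def by blast+

lemma natural_functional_diff:
  "natural_functional \<phi> \<Longrightarrow> p \<in> P \<Longrightarrow> y \<in> V p \<Longrightarrow> z \<in> V p \<Longrightarrow> \<phi> p (y - z) = \<phi> p y - \<phi> p z"
  using natural_functionalD(1)[of \<phi> p "y - z" z] V_diff by (simp add: algebra_simps)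

lemma natural_functional_zero: "natural_functional \<phi> \<Longrightarrow> p \<in> P \<Longrightarrow> \<phi> p 0 = 0"
  using natural_functionalD(2)[of \<phi> p 0 0] V_zero by simp

context
  fixes \<phi> :: "'p \<Rightarrow> 'v \<Rightarrow> 'k" and x :: "'p \<Rightarrow> 'v"
  assumes \<phi>: "natural_functional \<phi>"
    and x_in_V: "\<And>p. p \<in> P \<Longrightarrow> x p \<in> V p"
    and \<phi>_x: "\<And>p. p \<in> P \<Longrightarrow> \<phi> p (x p) = 1"
    and x_natural: "\<And>p q. (p, q) \<in> R \<Longrightarrow> f p q (x p) = x q"
begin

lemmas \<phi>_add = natural_functionalD(1)[OF \<phi>]
  and \<phi>_scale = natural_functionalD(2)[OF \<phi>]
  and \<phi>_natural = natural_functionalD(3)[OF \<phi>]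

lemma is_submod_span_section: "is_submod P R scale V f (\<lambda>p. span {x p})"
  unfolding is_submod_def
proof (intro conjI ballI impI)
  fix p assume "p \<in> P"
  then show "span {x p} \<subseteq> V p" by (intro span_minimal) (simp_all add: x_in_V subspace_V)
next
  fix p q y assume pq: "(p, q) \<in> R" and "y \<in> span {x p}"
  then obtain c where "y = c *s x p" unfolding span_singleton by blast
  then have "f p q y = c *s x q"
    using f_scale[OF pq x_in_V[OF R_field(1)[OF pq]]] x_natural[OF pq] by simp
  then show "f p q y \<in> span {x q}" unfolding span_singleton by blast
qed (rule subspace_span)

lemma is_submod_kernel: "is_submod P R scale V f (\<lambda>p. {y \<in> V p. \<phi> p y = 0})"
  unfolding is_submod_def
proof (intro conjI ballI impI)
  fix p assume p: "p \<in> P"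
  have "\<phi> p 0 = 0" using natural_functional_zero[OF \<phi> p] .
  then show "subspace {y \<in> V p. \<phi> p y = 0}"
    by (intro subspaceI) (simp_all add: p V_zero V_add V_scale \<phi>_add \<phi>_scale)
qed (auto simp: f_in_V \<phi>_natural)

lemma span_section_kernel_direct_sum:
  assumes p: "p \<in> P"
  shows "span {x p} \<inter> {y \<in> V p. \<phi> p y = 0} = {0}"
    and "V p = {y + z | y z. y \<in> span {x p} \<and> z \<in> {y \<in> V p. \<phi> p y = 0}}"
proof -
  have \<phi>_line: "\<phi> p (c *s x p) = c" for c
    using \<phi>_scale[OF p x_in_V[OF p]] \<phi>_x[OF p] by simp
  show "span {x p} \<inter> {y \<in> V p. \<phi> p y = 0} = {0}"
  proof (intro equalityI subsetI)
    fix y assume "y \<in> span {x p} \<inter> {y \<in> V p. \<phi> p y = 0}"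
    then obtain c where "y = c *s x p" "\<phi> p y = 0" unfolding span_singleton by blast
    then show "y \<in> {0}" using \<phi>_line by simp
  next
    fix w :: 'v assume "w \<in> {0}"
    then show "w \<in> span {x p} \<inter> {y \<in> V p. \<phi> p y = 0}"
      using span_zero V_zero[OF p] \<phi>_line[of 0] by simp
  qed
  show "V p = {y + z | y z. y \<in> span {x p} \<and> z \<in> {y \<in> V p. \<phi> p y = 0}}"
  proof (intro equalityI subsetI)
    fix w assume w: "w \<in> V p"
    define y where "y = \<phi> p w *s x p"
    have yV: "y \<in> V p" unfolding y_def using V_scale x_in_V p by blast
    have "y \<in> span {x p}" unfolding y_def span_singleton by blast
    moreover have "w - y \<in> {y \<in> V p. \<phi> p y = 0}"
      using natural_functional_diff[OF \<phi> p w yV] V_diff[OF p w yV] \<phi>_line unfolding y_def by simp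
    moreover have "w = y + (w - y)" by simp
    ultimately show "w \<in> {y + z | y z. y \<in> span {x p} \<and> z \<in> {y \<in> V p. \<phi> p y = 0}}"
      by blast
  next
    fix w assume "w \<in> {y + z | y z. y \<in> span {x p} \<and> z \<in> {y \<in> V p. \<phi> p y = 0}}"
    then obtain y z where "w = y + z" "y \<in> span {x p}" "z \<in> V p" by blast
    then show "w \<in> V p"
      using is_submod_span_section p V_add unfolding is_submod_def by blast
  qed
qed

lemma span_section_iso_kP: "pmod_iso P R (*) kP_space kP_map scale (\<lambda>p. span {x p}) f"
  unfolding pmod_iso_def
proof (intro exI[of _ "\<lambda>p c. c *s x p"] conjI ballI allI impI)
  fix p assume p: "p \<in> P"
  have "x p \<noteq> 0" using \<phi>_x[OF p] natural_functional_zero[OF \<phi> p] by force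
  then show "bij_betw (\<lambda>c. c *s x p) (kP_space p) (span {x p})"
    unfolding bij_betw_def inj_on_def kP_space_def span_singleton by auto
  show "(a + b) *s x p = a *s x p + b *s x p" for a b by (rule scale_left_distrib)
  show "(a * b) *s x p = a *s b *s x p" for a b by simp
next
  fix p q a assume pq: "(p, q) \<in> R"
  show "kP_map p q a *s x q = f p q (a *s x p)"
    unfolding kP_map_def f_scale[OF pq x_in_V[OF R_field(1)[OF pq]]] x_natural[OF pq] ..
qed

lemma has_kP_summand_if_section: "has_kP_summand P R scale V f"
  unfolding has_kP_summand_def
  using is_submod_span_section is_submod_kernel span_section_kernel_direct_sum span_section_iso_kP
  by (intro exI conjI ballI) assumption+

end

end

locale pfd_module = persistence_module scale P R V f
  for scale :: "'k::field \<Rightarrow> 'v::ab_group_add \<Rightarrow> 'v" (infixr \<open>*s\<close> 75)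
    and P :: "'p set" and R :: "'p rel" and V :: "'p \<Rightarrow> 'v set" and f :: "'p \<Rightarrow> 'p \<Rightarrow> 'v \<Rightarrow> 'v" +
  assumes pfd: "pfd P scale V"
begin

lemma V_finite_span:
  assumes "p \<in> P"
  obtains B where "finite B" "span B = V p"
  using pfd assms unfolding pfd_def by blast

lemma flat_chain_in_V_Inter_nonempty:
  assumes "p \<in> P" "\<F> \<noteq> {}" "\<And>S. S \<in> \<F> \<Longrightarrow> flat S \<and> S \<noteq> {} \<and> S \<subseteq> V p"
    and "\<And>S T. S \<in> \<F> \<Longrightarrow> T \<in> \<F> \<Longrightarrow> S \<subseteq> T \<or> T \<subseteq> S"
  shows "\<Inter>\<F> \<noteq> {}"
proof -
  obtain B where "finite B" "span B = V p" using V_finite_span assms(1) .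
  then show ?thesis using flat_chain_Inter_nonempty[of B \<F>] assms(2-4) by auto
qed


definition struct_kernel :: "'p \<Rightarrow> 'p \<Rightarrow> 'v set" where
  "struct_kernel p q = {z \<in> V p. f p q z = 0}"

lemma subspace_struct_kernel: "(p, q) \<in> R \<Longrightarrow> subspace (struct_kernel p q)"
  unfolding struct_kernel_def
  by (rule subspaceI) (auto simp: f_zero V_zero V_add V_scale f_add f_scale R_field)

lemma struct_kernel_mono: "(p, q) \<in> R \<Longrightarrow> (q, s) \<in> R \<Longrightarrow> struct_kernel p q \<subseteq> struct_kernel p s"
  unfolding struct_kernel_def using f_comp f_zero by force

text \<open>The kernels of the maps out of \<open>p\<close> grow along \<open>R\<close> inside the finite-dimensional \<open>V p\<close>;
  one of maximal dimension can grow no further.\<close>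
lemma struct_kernel_stabilizes:
  assumes p: "p \<in> P"
  obtains q where "(p, q) \<in> R" "\<And>s. (q, s) \<in> R \<Longrightarrow> struct_kernel p s = struct_kernel p q"
proof -
  obtain B where B: "finite B" "span B = V p" using V_finite_span p .
  have in_span: "struct_kernel p q \<subseteq> span B" for q using B(2) unfolding struct_kernel_def by blast
  obtain q where q: "(p, q) \<in> R"
    and max: "\<And>s. (p, s) \<in> R \<Longrightarrow> dim (struct_kernel p s) \<le> dim (struct_kernel p q)"
    using ex_has_greatest_nat[of "\<lambda>q. (p, q) \<in> R" p "\<lambda>q. dim (struct_kernel p q)" "Suc (card B)"]
      R_refl[OF p] dim_le_card[OF in_span B(1)] by (metis less_Suc_eq_le)
  have "struct_kernel p s = struct_kernel p q" if s: "(q, s) \<in> R" for s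
  proof (rule ccontr)
    assume "struct_kernel p s \<noteq> struct_kernel p q"
    with struct_kernel_mono[OF q s] have "struct_kernel p q \<subset> struct_kernel p s" by blast
    then have "dim (struct_kernel p q) < dim (struct_kernel p s)"
      using dim_strict_mono[OF B(1) subspace_struct_kernel[OF q]] in_span by blast
    with max[OF R_trans[OF q s]] show False by simp
  qed
  with q show thesis using that by blast
qed

end

locale codirected_pfd_module = pfd_module scale P R V f
  for scale :: "'k::field \<Rightarrow> 'v::ab_group_add \<Rightarrow> 'v" (infixr \<open>*s\<close> 75)
    and P :: "'p set" and R :: "'p rel" and V :: "'p \<Rightarrow> 'v set" and f :: "'p \<Rightarrow> 'p \<Rightarrow> 'v \<Rightarrow> 'v" +
  assumes codirected: "codirected_on P R"
begin

lemma common_lower_bound: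
  assumes "p \<in> P" "q \<in> P"
  obtains r where "(r, p) \<in> R" "(r, q) \<in> R"
  using codirected assms unfolding codirected_on_def by blast

context
  fixes \<C> :: "('p \<Rightarrow> 'v set) set"
  assumes nonempty: "\<C> \<noteq> {}" and sys: "\<And>S. S \<in> \<C> \<Longrightarrow> flat_system S"
    and chain: "\<And>S T. S \<in> \<C> \<Longrightarrow> T \<in> \<C> \<Longrightarrow> S \<le> T \<or> T \<le> S"
begin

lemma chain_flat_systems_pointwise: "S \<in> \<C> \<Longrightarrow> T \<in> \<C> \<Longrightarrow> S p \<subseteq> T p \<or> T p \<subseteq> S p"
  using chain by (auto simp: le_fun_def)

text \<open>Surjectivity onto \<open>y\<close> reduces to a chain of nonempty flats, the fibres over \<open>y\<close>.\<close>
lemma image_Inf_flat_systems: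
  assumes pq: "(p, q) \<in> R"
  shows "f p q ` (Inf \<C>) p = (Inf \<C>) q"
proof (intro equalityI subsetI)
  have image: "f p q ` S p = S q" if "S \<in> \<C>" for S using flat_systemD(4)[OF sys[OF that] pq] .
  fix y
  show "y \<in> (Inf \<C>) q" if "y \<in> f p q ` (Inf \<C>) p" using that image by auto
  assume y: "y \<in> (Inf \<C>) q"
  have p: "p \<in> P" using R_field(1)[OF pq] .
  have fibre: "flat (S p \<inter> {z. f p q z = y}) \<and> S p \<inter> {z. f p q z = y} \<noteq> {} \<and>
      S p \<inter> {z. f p q z = y} \<subseteq> V p" if "S \<in> \<C>" for S
  proof -
    have "y \<in> f p q ` S p" using y image[OF that] that by auto
    then show ?thesis using flat_fibre[OF pq] flat_systemD(1,3)[OF sys[OF that] p] by blast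
  qed
  have "\<Inter>((\<lambda>S. S p \<inter> {z. f p q z = y}) ` \<C>) \<noteq> {}"
    by (rule flat_chain_in_V_Inter_nonempty[OF p])
      ((use nonempty fibre chain_flat_systems_pointwise in blast)+)
  then obtain z where "\<forall>S\<in>\<C>. z \<in> S p" "f p q z = y" using nonempty by blast
  then show "y \<in> f p q ` (Inf \<C>) p" unfolding Inf_apply by (intro image_eqI[of y _ z]) auto
qed

lemma flat_system_Inf: "flat_system (Inf \<C>)"
  unfolding flat_system_def
proof (intro conjI ballI allI impI)
  fix p assume p: "p \<in> P"
  show "flat ((Inf \<C>) p)"
    unfolding Inf_apply by (rule flat_Inter) (use flat_systemD(1)[OF sys p] in auto)
  show "(Inf \<C>) p \<noteq> {}"
    unfolding Inf_apply by (rule flat_chain_in_V_Inter_nonempty[OF p])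
      ((use nonempty flat_systemD(1-3)[OF sys p] chain_flat_systems_pointwise in blast)+)
  show "(Inf \<C>) p \<subseteq> V p"
    using nonempty flat_systemD(3)[OF sys p] by auto
qed (rule image_Inf_flat_systems)

end

lemma exists_minimal_flat_subsystem:
  assumes "flat_system F"
  obtains m where "flat_system m" "m \<le> F" "\<And>S. flat_system S \<Longrightarrow> S \<le> m \<Longrightarrow> S = m"
proof -
  let ?A = "{S. flat_system S \<and> S \<le> F}"
  have "partial_order_on ?A (relation_of (\<lambda>S T. T \<le> S) ?A)"
    by (rule partial_order_on_relation_ofI) auto
  then have "\<exists>m\<in>?A. \<forall>S\<in>?A. S \<le> m \<longrightarrow> S = m"
  proof (rule predicate_Zorn)
    fix \<C> assume "\<C> \<in> Chains (relation_of (\<lambda>S T. T \<le> S) ?A)"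
    then have \<C>: "\<C> \<subseteq> ?A" "\<And>S T. S \<in> \<C> \<Longrightarrow> T \<in> \<C> \<Longrightarrow> S \<le> T \<or> T \<le> S"
      unfolding Chains_def relation_of_def by auto
    show "\<exists>u\<in>?A. \<forall>S\<in>\<C>. u \<le> S"
    proof (cases "\<C> = {}")
      case False
      then obtain S where "S \<in> \<C>" by blast
      then have "Inf \<C> \<le> F" using \<C>(1) by (blast intro: Inf_lower2)
      moreover have "flat_system (Inf \<C>)" by (rule flat_system_Inf[OF False]) (use \<C> in auto)
      ultimately have "Inf \<C> \<in> ?A" by simp
      then show ?thesis by (blast intro: Inf_lower)
    qed (use assms in auto)
  qed
  then obtain m where m: "m \<in> ?A" and minimal: "\<forall>S\<in>?A. S \<le> m \<longrightarrow> S = m" ..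
  show thesis
  proof (rule that)
    show "flat_system m" "m \<le> F" using m by simp_all
    show "S = m" if "flat_system S" "S \<le> m" for S
      using minimal that order_trans[OF that(2)] m by simp
  qed
qed

text \<open>The part of a flat system lying over a chosen point \<open>a \<in> S p\<close>: at \<open>q\<close> it is the image
  of the fibre over \<open>a\<close> at any common lower bound of \<open>p\<close> and \<open>q\<close>.\<close>
definition fibre_subsystem :: "('p \<Rightarrow> 'v set) \<Rightarrow> 'p \<Rightarrow> 'v \<Rightarrow> 'p \<Rightarrow> 'v set" where
  "fibre_subsystem S p a q = (\<Union>r\<in>{r. (r, p) \<in> R \<and> (r, q) \<in> R}. f r q ` (S r \<inter> {z. f r p z = a}))"

lemma fibre_image_lower:
  assumes S: "flat_system S" and sr: "(s, r) \<in> R" and "(r, p) \<in> R" "(r, q) \<in> R"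
  shows "f r q ` (S r \<inter> {z. f r p z = a}) = f s q ` (S s \<inter> {z. f s p z = a})"
proof -
  have comp: "f r t (f s r z) = f s t z" if "(r, t) \<in> R" "z \<in> S s" for t z
    using f_comp[OF sr that(1)] flat_systemD(3)[OF S R_field(1)[OF sr]] that(2) by blast
  have "S r \<inter> {z. f r p z = a} = f s r ` (S s \<inter> {z. f s p z = a})"
    unfolding flat_systemD(4)[OF S sr, symmetric] using comp[OF assms(3)] by auto
  then have "f r q ` (S r \<inter> {z. f r p z = a}) = (\<lambda>z. f r q (f s r z)) ` (S s \<inter> {z. f s p z = a})"
    by (simp add: image_image)
  also have "\<dots> = f s q ` (S s \<inter> {z. f s p z = a})"
    by (rule image_cong) (simp_all add: comp[OF assms(4)])
  finally show ?thesis .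
qed

lemma fibre_subsystem_eq:
  assumes S: "flat_system S" and r: "(r, p) \<in> R" "(r, q) \<in> R"
  shows "fibre_subsystem S p a q = f r q ` (S r \<inter> {z. f r p z = a})"
  unfolding fibre_subsystem_def
proof (rule SUP_eq_const)
  show "{r. (r, p) \<in> R \<and> (r, q) \<in> R} \<noteq> {}" using r by blast
next
  fix r' assume "r' \<in> {r. (r, p) \<in> R \<and> (r, q) \<in> R}"
  then have r': "(r', p) \<in> R" "(r', q) \<in> R" by simp_all
  obtain s where s: "(s, r') \<in> R" "(s, r) \<in> R"
    using common_lower_bound R_field(1) r(1) r'(1) by metis
  show "f r' q ` (S r' \<inter> {z. f r' p z = a}) = f r q ` (S r \<inter> {z. f r p z = a})"
    using fibre_image_lower[OF S s(1) r'] fibre_image_lower[OF S s(2) r] by simp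
qed

lemma fibre_subsystem_le: "flat_system S \<Longrightarrow> fibre_subsystem S p a \<le> S"
  unfolding fibre_subsystem_def le_fun_def using flat_systemD(4) by blast

lemma fibre_subsystem_at:
  assumes "flat_system S" "p \<in> P" "a \<in> S p"
  shows "fibre_subsystem S p a p = {a}"
proof -
  have "f p p z = z" if "z \<in> S p" for z using f_id flat_systemD(3) assms that by blast
  then show ?thesis
    using fibre_subsystem_eq[OF assms(1) R_refl R_refl] assms by force
qed

lemma flat_system_fibre_subsystem:
  assumes S: "flat_system S" and p: "p \<in> P" and a: "a \<in> S p"
  shows "flat_system (fibre_subsystem S p a)"
  unfolding flat_system_def
proof (intro conjI ballI allI impI)
  fix q assume q: "q \<in> P"
  obtain r where r: "(r, p) \<in> R" "(r, q) \<in> R" using common_lower_bound p q .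
  have rP: "r \<in> P" using R_field r by blast
  have "flat (S r \<inter> {z. f r p z = a})" using flat_fibre r flat_systemD(1,3)[OF S rP] by blast
  then have "flat (f r q ` (S r \<inter> {z. f r p z = a}))"
    using flat_image[OF r(2)] flat_systemD(3)[OF S rP] by blast
  then show "flat (fibre_subsystem S p a q)" unfolding fibre_subsystem_eq[OF S r] .
  have "a \<in> f r p ` S r" using flat_systemD(4)[OF S r(1)] a by simp
  then show "fibre_subsystem S p a q \<noteq> {}" unfolding fibre_subsystem_eq[OF S r] by blast
  show "fibre_subsystem S p a q \<subseteq> V q"
    using le_funD[OF fibre_subsystem_le[OF S], of p a q] flat_systemD(3)[OF S q] by blast
next
  fix q q' assume qq': "(q, q') \<in> R"
  obtain r where r: "(r, p) \<in> R" "(r, q) \<in> R" using common_lower_bound p R_field qq' by metis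
  have r': "(r, q') \<in> R" using R_trans r(2) qq' .
  have "f q q' (f r q z) = f r q' z" if "z \<in> S r" for z
    using f_comp[OF r(2) qq'] flat_systemD(3)[OF S R_field(1)[OF r(1)]] that by blast
  then show "f q q' ` fibre_subsystem S p a q = fibre_subsystem S p a q'"
    unfolding fibre_subsystem_eq[OF S r] fibre_subsystem_eq[OF S r(1) r'] image_image
    by (auto intro: image_cong)
qed

lemma minimal_flat_system_singleton:
  assumes "flat_system m" "\<And>S. flat_system S \<Longrightarrow> S \<le> m \<Longrightarrow> S = m" "p \<in> P" "a \<in> m p"
  shows "m p = {a}"
proof -
  have "fibre_subsystem m p a = m"
    using assms(2) flat_system_fibre_subsystem[OF assms(1,3,4)] fibre_subsystem_le[OF assms(1)] .
  then show ?thesis using fibre_subsystem_at[OF assms(1,3,4)] by simp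
qed

theorem flat_system_section:
  assumes "flat_system F"
  obtains x where "\<And>p. p \<in> P \<Longrightarrow> x p \<in> F p" "\<And>p q. (p, q) \<in> R \<Longrightarrow> f p q (x p) = x q"
proof -
  obtain m where m: "flat_system m" "m \<le> F" and minimal: "\<And>S. flat_system S \<Longrightarrow> S \<le> m \<Longrightarrow> S = m"
    using exists_minimal_flat_subsystem[OF assms] by blast
  define x where "x p = (SOME a. a \<in> m p)" for p
  have x: "x p \<in> m p" if "p \<in> P" for p
    unfolding x_def using flat_systemD(2)[OF m(1) that] by (simp add: some_in_eq)
  have singleton: "m p = {x p}" if "p \<in> P" for p
    using minimal_flat_system_singleton[OF m(1) minimal that x[OF that]] .
  show thesis
  proof
    show "x p \<in> F p" if "p \<in> P" for p using x[OF that] m(2) by (auto simp: le_fun_def)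
    show "f p q (x p) = x q" if "(p, q) \<in> R" for p q
      using flat_systemD(4)[OF m(1) that] x R_field[OF that] singleton by blast
  qed
qed

end

locale surjective_pfd_module = pfd_module scale P R V f
  for scale :: "'k::field \<Rightarrow> 'v::ab_group_add \<Rightarrow> 'v" (infixr \<open>*s\<close> 75)
    and P :: "'p set" and R :: "'p rel" and V :: "'p \<Rightarrow> 'v set" and f :: "'p \<Rightarrow> 'p \<Rightarrow> 'v \<Rightarrow> 'v" +
  assumes surjective: "\<forall>p\<in>P. \<forall>q\<in>P. (p, q) \<in> R \<longrightarrow> f p q ` V p = V q"
begin

lemma f_surj: "(p, q) \<in> R \<Longrightarrow> f p q ` V p = V q"
  using surjective R_field by blast

lemma injective_point_exists:
  assumes "p \<in> P"
  obtains p0 where "injective_point p0"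
proof -
  obtain q where q: "(p, q) \<in> R" and stable: "\<And>s. (q, s) \<in> R \<Longrightarrow> struct_kernel p s = struct_kernel p q"
    using struct_kernel_stabilizes assms by blast
  have "inj_on (f q s) (V q)" if s: "(q, s) \<in> R" for s
  proof (rule inj_onI)
    fix y y' assume "y \<in> V q" "y' \<in> V q" and eq: "f q s y = f q s y'"
    then obtain z z' where z: "z \<in> V p" "z' \<in> V p" "y = f p q z" "y' = f p q z'"
      using f_surj[OF q] by (metis imageE)
    have "f p s (z - z') = 0"
      using eq z f_diff[OF R_trans[OF q s]] f_comp[OF q s] by simp
    then have "z - z' \<in> struct_kernel p q"
      using stable[OF s] z V_diff assms unfolding struct_kernel_def by blast
    then show "y = y'" using z f_diff[OF q] unfolding struct_kernel_def by simp
  qed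
  then show thesis using that R_field(2)[OF q] unfolding injective_point_def by blast
qed

lemma flat_system_level_set:
  assumes \<phi>: "natural_functional \<phi>" and onto: "\<And>p. p \<in> P \<Longrightarrow> \<exists>y\<in>V p. \<phi> p y = 1"
  shows "flat_system (\<lambda>p. {y \<in> V p. \<phi> p y = 1})"
  unfolding flat_system_def
proof (intro conjI ballI allI impI)
  fix p assume p: "p \<in> P"
  show "flat {y \<in> V p. \<phi> p y = 1}"
    unfolding flat_def
    by (auto simp: p V_add V_diff V_scale natural_functionalD[OF \<phi>] natural_functional_diff[OF \<phi>])
  show "{y \<in> V p. \<phi> p y = 1} \<noteq> {}" using onto[OF p] by blast
  show "{y \<in> V p. \<phi> p y = 1} \<subseteq> V p" by blast
next
  fix p q assume pq: "(p, q) \<in> R"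
  show "f p q ` {y \<in> V p. \<phi> p y = 1} = {y \<in> V q. \<phi> q y = 1}"
  proof (intro equalityI subsetI)
    fix y assume "y \<in> {y \<in> V q. \<phi> q y = 1}"
    moreover obtain z where "z \<in> V p" "y = f p q z"
      using f_surj[OF pq] calculation by blast
    ultimately show "y \<in> f p q ` {y \<in> V p. \<phi> p y = 1}"
      using natural_functionalD(3)[OF \<phi> pq] by auto
  qed (use f_in_V[OF pq] natural_functionalD(3)[OF \<phi> pq] in auto)
qed

end

locale bidirected_surjective_pfd_module =
  codirected_pfd_module scale P R V f + surjective_pfd_module scale P R V f
  for scale :: "'k::field \<Rightarrow> 'v::ab_group_add \<Rightarrow> 'v" (infixr \<open>*s\<close> 75)
    and P :: "'p set" and R :: "'p rel" and V :: "'p \<Rightarrow> 'v set" and f :: "'p \<Rightarrow> 'p \<Rightarrow> 'v \<Rightarrow> 'v" +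
  assumes directed: "directed_on P R"
begin

lemma common_upper_bound:
  assumes "p \<in> P" "q \<in> P"
  obtains r where "(p, r) \<in> R" "(q, r) \<in> R"
  using directed assms unfolding directed_on_def by blast

context
  fixes p0 :: 'p
  assumes p0: "injective_point p0"
begin

lemma p0_in_P: "p0 \<in> P" and inj_from_p0: "(p0, s) \<in> R \<Longrightarrow> inj_on (f p0 s) (V p0)"
  using p0 unfolding injective_point_def by blast+

text \<open>Every \<open>V q\<close> maps to \<open>V p0\<close> by going up to a common upper bound \<open>s\<close>, where \<open>f p0 s\<close>
  is bijective, and coming back.\<close>
definition transport :: "'p \<Rightarrow> 'v \<Rightarrow> 'v" where
  "transport q y = (THE w. w \<in> V p0 \<and> (\<exists>s. (q, s) \<in> R \<and> (p0, s) \<in> R \<and> f p0 s w = f q s y))"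

lemma transport_unique:
  assumes y: "y \<in> V q"
    and w: "w \<in> V p0" "(q, s) \<in> R" "(p0, s) \<in> R" "f p0 s w = f q s y"
    and w': "w' \<in> V p0" "(q, s') \<in> R" "(p0, s') \<in> R" "f p0 s' w' = f q s' y"
  shows "w = w'"
proof -
  obtain t where t: "(s, t) \<in> R" "(s', t) \<in> R" using common_upper_bound R_field w(2) w'(2) by metis
  have "f p0 t w = f q t y" using f_comp[OF w(3) t(1) w(1)] f_comp[OF w(2) t(1) y] w(4) by simp
  moreover have "f p0 t w' = f q t y" using f_comp[OF w'(3) t(2) w'(1)] f_comp[OF w'(2) t(2) y] w'(4) by simp
  ultimately show ?thesis using inj_onD[OF inj_from_p0[OF R_trans[OF w(3) t(1)]] _ w(1) w'(1)] by simp
qed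

lemma transport:
  assumes "y \<in> V q" "(q, s) \<in> R" "(p0, s) \<in> R"
  shows "transport q y \<in> V p0" and "f p0 s (transport q y) = f q s y"
proof -
  obtain w where w: "w \<in> V p0" "f p0 s w = f q s y"
    using f_surj[OF assms(3)] f_in_V[OF assms(2,1)] by (metis imageE)
  have "transport q y = w"
    unfolding transport_def
    by (rule the_equality) (use w assms transport_unique[OF assms(1)] in blast)+
  with w show "transport q y \<in> V p0" "f p0 s (transport q y) = f q s y" by simp_all
qed

lemma transport_eqI:
  assumes "y \<in> V q" "(q, s) \<in> R" "(p0, s) \<in> R" "w \<in> V p0" "f p0 s w = f q s y"
  shows "transport q y = w"
  using transport_unique[OF assms(1) transport(1)[OF assms(1-3)] assms(2,3) transport(2)[OF assms(1-3)]
      assms(4) assms(2,3) assms(5)] .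

lemma upper_bound_with_p0:
  assumes "q \<in> P"
  obtains s where "(q, s) \<in> R" "(p0, s) \<in> R"
  using common_upper_bound[OF assms p0_in_P] .

lemma transport_add:
  assumes "q \<in> P" "y \<in> V q" "z \<in> V q"
  shows "transport q (y + z) = transport q y + transport q z"
proof -
  obtain s where s: "(q, s) \<in> R" "(p0, s) \<in> R" using upper_bound_with_p0 assms(1) .
  show ?thesis
    using transport[OF assms(2) s] transport[OF assms(3) s]
    by (intro transport_eqI[OF V_add[OF assms] s]) (simp_all add: V_add p0_in_P f_add assms s)
qed

lemma transport_scale:
  assumes "q \<in> P" "y \<in> V q"
  shows "transport q (c *s y) = c *s transport q y"
proof -
  obtain s where s: "(q, s) \<in> R" "(p0, s) \<in> R" using upper_bound_with_p0 assms(1) .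
  show ?thesis
    using transport[OF assms(2) s]
    by (intro transport_eqI[OF V_scale[OF assms] s]) (simp_all add: V_scale p0_in_P f_scale assms s)
qed

lemma transport_natural:
  assumes "(q, q') \<in> R" "y \<in> V q"
  shows "transport q' (f q q' y) = transport q y"
proof -
  obtain s where s: "(q', s) \<in> R" "(p0, s) \<in> R" using upper_bound_with_p0 R_field(2)[OF assms(1)] .
  show ?thesis
    using transport[OF assms(2) R_trans[OF assms(1) s(1)] s(2)] f_comp[OF assms(1) s(1) assms(2)]
    by (intro transport_eqI[OF f_in_V[OF assms] s]) simp_all
qed

lemma transport_onto:
  assumes "q \<in> P" "v \<in> V p0"
  shows "\<exists>y\<in>V q. transport q y = v"
proof -
  obtain r where r: "(r, q) \<in> R" "(r, p0) \<in> R" using common_lower_bound assms(1) p0_in_P .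
  obtain z where z: "z \<in> V r" "f r p0 z = v" using f_surj[OF r(2)] assms(2) by (metis imageE)
  obtain s where s: "(q, s) \<in> R" "(p0, s) \<in> R" using upper_bound_with_p0 assms(1) .
  have "transport q (f r q z) = v"
    using f_comp[OF r(1) s(1) z(1)] f_comp[OF r(2) s(2) z(1)] z(2) assms(2)
    by (intro transport_eqI[OF f_in_V[OF r(1) z(1)] s]) simp_all
  then show ?thesis using f_in_V[OF r(1) z(1)] by blast
qed

lemma natural_functional_onto_exists:
  assumes "V p0 \<noteq> {0}"
  obtains \<phi> where "natural_functional \<phi>" "\<And>p. p \<in> P \<Longrightarrow> \<exists>y\<in>V p. \<phi> p y = 1"
proof -
  obtain v where v: "v \<in> V p0" "v \<noteq> 0" using assms V_zero[OF p0_in_P] by blast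
  interpret field_space: vector_space "(*) :: 'k \<Rightarrow> 'k \<Rightarrow> 'k"
    by unfold_locales (simp_all add: algebra_simps)
  interpret pair: vector_space_pair scale "(*) :: 'k \<Rightarrow> 'k \<Rightarrow> 'k" ..
  obtain g where g: "Vector_Spaces.linear scale (*) g" "g v = 1"
    using pair.linear_independent_extend[of "{v}" "\<lambda>_. 1"] v(2) by auto
  define \<phi> where "\<phi> q y = g (transport q y)" for q y
  show thesis
  proof (rule that)
    show "natural_functional \<phi>"
      unfolding natural_functional_def \<phi>_def
      using g(1) unfolding Vector_Spaces.linear_iff
      by (simp add: transport_add transport_scale transport_natural transport(1))
    show "\<exists>y\<in>V p. \<phi> p y = 1" if "p \<in> P" for p
      using transport_onto[OF that v(1)] g(2) unfolding \<phi>_def by auto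
  qed
qed

end

theorem has_kP_summand:
  assumes "P \<noteq> {}" "\<forall>p\<in>P. V p \<noteq> {0}"
  shows "has_kP_summand P R scale V f"
proof -
  obtain p0 where p0: "injective_point p0" using injective_point_exists assms(1) by blast
  then have "V p0 \<noteq> {0}" using assms(2) unfolding injective_point_def by blast
  then obtain \<phi> where \<phi>: "natural_functional \<phi>" and onto: "\<And>p. p \<in> P \<Longrightarrow> \<exists>y\<in>V p. \<phi> p y = 1"
    using natural_functional_onto_exists[OF p0] by blast
  obtain x where "\<And>p. p \<in> P \<Longrightarrow> x p \<in> {y \<in> V p. \<phi> p y = 1}" "\<And>p q. (p, q) \<in> R \<Longrightarrow> f p q (x p) = x q"
    using flat_system_section[OF flat_system_level_set[OF \<phi> onto]] by blast
  then show ?thesis using has_kP_summand_if_section[OF \<phi>] by blast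
qed

end

theorem lemma2p3:
  fixes P :: "'p set" and R :: "'p rel"
    and sc :: "'k::field \<Rightarrow> 'v::ab_group_add \<Rightarrow> 'v"
    and V :: "'p \<Rightarrow> 'v set" and f :: "'p \<Rightarrow> 'p \<Rightarrow> 'v \<Rightarrow> 'v"
  assumes "partial_order_on P R"
    and "directed_on P R" and "codirected_on P R"
    and "vector_space sc"
    and "is_pmod P R sc V f"
    and "pfd P sc V"
    and "\<forall>p\<in>P. V p \<noteq> {0}"
    and "\<forall>p\<in>P. \<forall>q\<in>P. (p, q) \<in> R \<longrightarrow> f p q ` V p = V q"
  shows "has_kP_summand P R sc V f"
proof (cases "P = {}")
  case True
  then show ?thesis unfolding has_kP_summand_def is_submod_def pmod_iso_def by auto
next
  case False
  interpret bidirected_surjective_pfd_module sc P R V f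
    by intro_locales (use assms in \<open>simp_all add: persistence_module_axioms_def pfd_module_axioms_def
        codirected_pfd_module_axioms_def surjective_pfd_module_axioms_def
        bidirected_surjective_pfd_module_axioms_def\<close>)
  show ?thesis using has_kP_summand False assms(7) .
qed

end
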